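(* Consider $\min_{\beta\in\mathbb{R}^p} f(\beta)+\sum_{j=1}^p g_j(\beta_j)$ under the following hypotheses: $f$ is convex, differentiable, with $|\nabla_j f(x+he_j)-\nabla_j f(x)|\le L_j|h|$ ($L_j>0$); each $g_j$ is proper, closed, lower bounded and $g_j/L_j+\frac{\alpha}{2}(\cdot)^2$ is convex for some $\alpha<1$; cyclic proximal coordinate descent converges to a critical point $\hat\beta$; with $\mathcal{S}=\mathrm{gsupp}(\hat\beta)=\{j_1,\dots,j_{|\mathcal{S}|}\}$, $-\nabla_j f(\hat\beta)\in\mathrm{interior}(\partial g_j(\hat\beta_j))$ for $j\notin\mathcal{S}$, $f$ is $\mathcal{C}^3$ near $\hat\beta$, $g_j$ is $\mathcal{C}^3$ near $\hat\beta_j$ for $j\in\mathcal{S}$, and $M:=\nabla^2_{\mathcal{S},\mathcal{S}}f(\hat\beta)+\nabla^2_{\mathcal{S},\mathcal{S}}g(\hat\beta)\succ0$. Let $\gamma_j=1/L_j$ and, for $s\in[|\mathcal{S}|]$, $B^{(s)}=M^{1/2}_{:s}\,\frac{\gamma_{j_s}}{1+\gamma_{j_s}g_{j_s}''(\hat\beta_{j_s})}\,(M^{1/2}_{:s})^\top$, where $M^{1/2}_{:s}$ is the $s$-th column of $M^{1/2}$. Then for all $s\in[|\mathcal{S}|]$ and all $u\in\mathbb{R}^{|\mathcal{S}|}$: if $\|(\mathrm{Id}-B^{(s)})u\|=\|u\|$, then $u\in\mathrm{Span}(M^{1/2}_{:s})^\perp$ and $(\mathrm{Id}-B^{(s)}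)u=u$.
   Context: $\partial$ is the Fréchet subdifferential, critical point means $-\nabla f(x)\in\partial g(x)$ with $g(\beta)=\sum_jg_j(\beta_j)$, and $\mathrm{gsupp}(\beta)=\{j:\partial g_j(\beta_j)\text{ is a singleton}\}$. $\nabla^2_{\mathcal{S},\mathcal{S}}g(\hat\beta)=\mathrm{diag}(g_j''(\hat\beta_j))_{j\in\mathcal{S}}$. Norms are Euclidean. Cyclic proximal coordinate descent updates, for $j=1,\dots,p$ in turn, $\beta_j\leftarrow\mathrm{prox}_{g_j/L_j}(\beta_j-\nabla_jf(\beta)/L_j)$, with $\mathrm{prox}_h(z)=\arg\min_u\frac12(u-z)^2+h(u)$. *)

theory Defs
  imports "HOL-Analysis.Analysis"
begin

definition ext_proper :: "(real \<Rightarrow> ereal) \<Rightarrow> bool" where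
  "ext_proper h \<longleftrightarrow> (\<exists>x. h x \<noteq> \<infinity>) \<and> (\<forall>x. h x \<noteq> -\<infinity>)"

text \<open>closed = lower semicontinuous\<close>
definition ext_closed :: "(real \<Rightarrow> ereal) \<Rightarrow> bool" where
  "ext_closed h \<longleftrightarrow> (\<forall>x c. c < h x \<longrightarrow> (\<forall>\<^sub>F y in at x. c < h y))"

definition ext_lower_bounded :: "(real \<Rightarrow> ereal) \<Rightarrow> bool" where
  "ext_lower_bounded h \<longleftrightarrow> (\<exists>c. \<forall>x. ereal c \<le> h x)"

definition ext_convex :: "(real \<Rightarrow> ereal) \<Rightarrow> bool" where
  "ext_convex h \<longleftrightarrow> (\<forall>x y t. 0 < t \<and> t < 1 \<longrightarrow>
      h ((1 - t) * x + t * y) \<le> ereal (1 - t) * h x + ereal t * h y)"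

definition frechet_subdiff :: "('a::real_inner \<Rightarrow> ereal) \<Rightarrow> 'a \<Rightarrow> 'a set" where
  "frechet_subdiff G x = {v. \<exists>r. G x = ereal r \<and>
      (\<forall>\<epsilon>>0. \<exists>\<delta>>0. \<forall>y. dist y x < \<delta> \<longrightarrow>
          ereal (r + inner v (y - x) - \<epsilon> * norm (y - x)) \<le> G y)}"

definition gsupp :: "('n \<Rightarrow> real \<Rightarrow> ereal) \<Rightarrow> real^'n \<Rightarrow> 'n set" where
  "gsupp g \<beta> = {j. \<exists>v. frechet_subdiff (g j) (\<beta> $ j) = {v}}"

definition sep_sum :: "('n::finite \<Rightarrow> real \<Rightarrow> ereal) \<Rightarrow> real^'n \<Rightarrow> ereal" where
  "sep_sum g \<beta> = (\<Sum>j\<in>UNIV. g j (\<beta> $ j))"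

definition pdiff :: "'n \<Rightarrow> (real^'n \<Rightarrow> real) \<Rightarrow> real^'n \<Rightarrow> real" where
  "pdiff j f x = frechet_derivative f (at x) (axis j 1)"

definition grad :: "(real^'n \<Rightarrow> real) \<Rightarrow> real^'n \<Rightarrow> real^'n" where
  "grad f x = (\<chi> j. pdiff j f x)"

definition hess :: "(real^'n \<Rightarrow> real) \<Rightarrow> real^'n \<Rightarrow> 'n \<Rightarrow> 'n \<Rightarrow> real" where
  "hess f x i j = pdiff i (pdiff j f) x"

text \<open>k times continuously differentiable on an open set U (finite dimension:
  differentiable with all partial derivatives of order \<le> k existing and continuous)\<close>
fun Ck_on :: "nat \<Rightarrow> 'a::euclidean_space set \<Rightarrow> ('a \<Rightarrow> real) \<Rightarrow> bool" where
  "Ck_on 0 U f \<longleftrightarrow> continuous_on U f"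
| "Ck_on (Suc k) U f \<longleftrightarrow> (\<forall>x\<in>U. f differentiable (at x)) \<and>
      (\<forall>b\<in>Basis. Ck_on k U (\<lambda>x. frechet_derivative f (at x) b))"

definition gpp :: "(real \<Rightarrow> ereal) \<Rightarrow> real \<Rightarrow> real" where
  "gpp h x = deriv (deriv (\<lambda>t. real_of_ereal (h t))) x"

definition prox :: "(real \<Rightarrow> ereal) \<Rightarrow> real \<Rightarrow> real" where
  "prox h z = (THE u. \<forall>v. ereal ((u - z)^2 / 2) + h u \<le> ereal ((v - z)^2 / 2) + h v)"

definition cd_update ::
  "(real^'n \<Rightarrow> real) \<Rightarrow> ('n \<Rightarrow> real \<Rightarrow> ereal) \<Rightarrow> ('n \<Rightarrow> real) \<Rightarrow> 'n \<Rightarrow> real^'n \<Rightarrow> real^'n" where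
  "cd_update f g L j \<beta> =
     (\<chi> i. if i = j then prox (\<lambda>u. g j u / ereal (L j)) (\<beta> $ j - pdiff j f \<beta> / L j) else \<beta> $ i)"

definition cd_epoch ::
  "((real, 'n::{finite,linorder}) vec \<Rightarrow> real) \<Rightarrow> ('n \<Rightarrow> real \<Rightarrow> ereal) \<Rightarrow> ('n \<Rightarrow> real) \<Rightarrow> (real, 'n) vec \<Rightarrow> (real, 'n) vec" where
  "cd_epoch f g L \<beta> = fold (cd_update f g L) (sorted_list_of_set UNIV) \<beta>"

definition sym_mat :: "nat \<Rightarrow> (nat \<Rightarrow> nat \<Rightarrow> real) \<Rightarrow> bool" where
  "sym_mat k A \<longleftrightarrow> (\<forall>s<k. \<forall>t<k. A s t = A t s)"

definition posdef_mat :: "nat \<Rightarrow> (nat \<Rightarrow> nat \<Rightarrow> real) \<Rightarrow> bool" where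
  "posdef_mat k A \<longleftrightarrow> sym_mat k A \<and>
     (\<forall>v. (\<exists>t<k. v t \<noteq> 0) \<longrightarrow> (\<Sum>s<k. \<Sum>t<k. v s * A s t * v t) > 0)"

definition psd_mat :: "nat \<Rightarrow> (nat \<Rightarrow> nat \<Rightarrow> real) \<Rightarrow> bool" where
  "psd_mat k A \<longleftrightarrow> sym_mat k A \<and> (\<forall>v. (\<Sum>s<k. \<Sum>t<k. v s * A s t * v t) \<ge> 0)"

text \<open>the (unique) symmetric positive semidefinite square root, zero outside {0..<k}\<close>
definition mat_sqrt :: "nat \<Rightarrow> (nat \<Rightarrow> nat \<Rightarrow> real) \<Rightarrow> (nat \<Rightarrow> nat \<Rightarrow> real)" where
  "mat_sqrt k A = (THE R. psd_mat k R \<and> (\<forall>s<k. \<forall>t<k. (\<Sum>r<k. R s r * R r t) = A s t) \<and>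
                          (\<forall>s t. k \<le> s \<or> k \<le> t \<longrightarrow> R s t = 0))"

definition vnorm :: "nat \<Rightarrow> (nat \<Rightarrow> real) \<Rightarrow> real" where
  "vnorm k u = sqrt (\<Sum>t<k. (u t)^2)"

text \<open>enumeration j_1 < ... < j_|S| of S (0-based: s = 0..|S|-1)\<close>
definition enum_idx :: "'n::{finite,linorder} set \<Rightarrow> nat \<Rightarrow> 'n" where
  "enum_idx S s = sorted_list_of_set S ! s"

definition Mmat :: "((real, 'n::{finite,linorder}) vec \<Rightarrow> real) \<Rightarrow> ('n \<Rightarrow> real \<Rightarrow> ereal) \<Rightarrow> 'n set
    \<Rightarrow> (real, 'n) vec \<Rightarrow> nat \<Rightarrow> nat \<Rightarrow> real" where
  "Mmat f g S \<beta> s t = hess f \<beta> (enum_idx S s) (enum_idx S t)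
      + (if s = t then gpp (g (enum_idx S s)) (\<beta> $ enum_idx S s) else 0)"

definition Bmat :: "((real, 'n::{finite,linorder}) vec \<Rightarrow> real) \<Rightarrow> ('n \<Rightarrow> real \<Rightarrow> ereal) \<Rightarrow> ('n \<Rightarrow> real)
    \<Rightarrow> 'n set \<Rightarrow> (real, 'n) vec \<Rightarrow> nat \<Rightarrow> nat \<Rightarrow> nat \<Rightarrow> real" where
  "Bmat f g L S \<beta> s a b =
     (let R = mat_sqrt (card S) (Mmat f g S \<beta>);
          j = enum_idx S s;
          \<gamma> = 1 / L j
      in R a s * (\<gamma> / (1 + \<gamma> * gpp (g j) (\<beta> $ j))) * R b s)"

end

theory Submission
  imports Defs
begin

(*
  B^(s) is the rank-one matrix c r r^T, where r is the s-th column of the symmetric square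
  root R of M and c = gamma / (1 + gamma g''), gamma = 1/L_j. Since R is symmetric with
  R R = M, |r|^2 = M_ss = f''_jj + g''_j. The coordinatewise Lipschitz bound gives
  f''_jj <= L_j, and the weak convexity of g_j / L_j + alpha/2 x^2 with alpha < 1 gives
  g''_j / L_j + alpha >= 0; together 0 < c and c |r|^2 <= 1. Now
  |u - c (r.u) r|^2 = |u|^2 - c (r.u)^2 (2 - c |r|^2), so the norm is preserved only if
  r.u = 0, and then the update leaves u unchanged. The convergence of coordinate descent,
  criticality, nondegeneracy and the convexity, properness, closedness and lower
  boundedness hypotheses are not needed for this step.

  That mat_sqrt is well defined amounts to existence and uniqueness of the positive
  semidefinite square root. Both rest on the spectral theorem for self-adjoint operators,
  whose eigenvectors are obtained by maximising the Rayleigh quotient on the unit sphere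
  of an invariant subspace.
*)

section \<open>Spectral theorem and square roots of operators\<close>

lemma linear_coeff_zero_if_quadratic_nonpos:
  fixes a c :: real
  assumes nonpos: "\<And>t. a * t + c * t\<^sup>2 \<le> 0"
  shows "a = 0"
proof (rule ccontr)
  assume "a \<noteq> 0"
  define t where "t = a / (\<bar>c\<bar> + 1)"
  have lower: "c * t\<^sup>2 \<ge> - \<bar>c\<bar> * t\<^sup>2"
    using mult_right_mono[of "- \<bar>c\<bar>" c "t\<^sup>2"] by simp
  have "a * t > 0"
    using \<open>a \<noteq> 0\<close> unfolding t_def times_divide_eq_right
    by (intro divide_pos_pos) (auto simp: zero_less_mult_iff linorder_neq_iff)
  have "\<bar>c\<bar> * t\<^sup>2 = \<bar>c\<bar> / (\<bar>c\<bar> + 1) * (a * t)"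
    by (simp add: t_def power2_eq_square)
  also have "\<dots> < a * t"
    using \<open>a * t > 0\<close> by (simp add: pos_divide_less_eq add_pos_nonneg distrib_left)
  finally have "\<bar>c\<bar> * t\<^sup>2 < a * t" .
  then show False
    using nonpos[of t] lower by linarith
qed

definition self_adjoint :: "('a::real_inner \<Rightarrow> 'a) \<Rightarrow> bool" where
  "self_adjoint A \<longleftrightarrow> (\<forall>x y. inner (A x) y = inner x (A y))"

definition psd_op :: "('a::real_inner \<Rightarrow> 'a) \<Rightarrow> bool" where
  "psd_op A \<longleftrightarrow> linear A \<and> self_adjoint A \<and> (\<forall>x. 0 \<le> inner x (A x))"

lemma self_adjoint_Rayleigh_maximizer_is_eigenvector:
  fixes A :: "'a::real_inner \<Rightarrow> 'a"
  assumes lin: "linear A" and sa: "self_adjoint A"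
    and V: "subspace V" "A ` V \<subseteq> V" and v: "v \<in> V" "norm v = 1"
    and max: "\<And>x. x \<in> V \<Longrightarrow> inner x (A x) \<le> inner v (A v) * inner x x"
  shows "A v = inner v (A v) *\<^sub>R v"
proof -
  define l where "l = inner v (A v)"
  define w where "w = A v - l *\<^sub>R v"
  have wV: "w \<in> V"
    using V v by (auto simp: w_def subspace_diff subspace_scale)
  have "2 * inner w w = 0"
  proof (rule linear_coeff_zero_if_quadratic_nonpos)
    fix t
    have "v + t *\<^sub>R w \<in> V"
      using V v wV by (simp add: subspace_add subspace_scale)
    then have "inner (v + t *\<^sub>R w) (A v + t *\<^sub>R A w) \<le> l * inner (v + t *\<^sub>R w) (v + t *\<^sub>R w)"
      using max[of "v + t *\<^sub>R w"] by (simp add: l_def linear_add[OF lin] linear_scale[OF lin])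
    moreover have "inner v (A w) = inner w (A v)"
      using sa by (simp add: self_adjoint_def inner_commute)
    moreover have "inner w (A v) - l * inner v w = inner w w"
      by (simp add: w_def inner_commute algebra_simps)
    moreover have "inner v v = 1"
      using v by (simp add: dot_square_norm)
    ultimately show "2 * inner w w * t + (inner w (A w) - l * inner w w) * t\<^sup>2 \<le> 0"
      by (simp add: l_def inner_commute power2_eq_square algebra_simps)
  qed
  then show ?thesis
    by (simp add: w_def l_def)
qed

lemma self_adjoint_has_unit_eigenvector:
  fixes A :: "'a::euclidean_space \<Rightarrow> 'a"
  assumes lin: "linear A" and sa: "self_adjoint A"
    and V: "subspace V" "A ` V \<subseteq> V" "V \<noteq> {0}"
  obtains v where "v \<in> V" "norm v = 1" "A v = inner v (A v) *\<^sub>R v"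
proof -
  define K where "K = V \<inter> sphere 0 1"
  have unit_in_K: "x /\<^sub>R norm x \<in> K" if "x \<in> V" "x \<noteq> 0" for x
    using that V(1) by (simp add: K_def subspace_scale)
  obtain x0 where "x0 \<in> V" "x0 \<noteq> 0"
    using V subspace_0 by blast
  then have "K \<noteq> {}"
    using unit_in_K by blast
  moreover have "compact K"
    unfolding K_def by (intro closed_Int_compact closed_subspace V compact_sphere)
  moreover have "continuous_on K (\<lambda>x. inner x (A x))"
    using lin by (intro continuous_intros linear_continuous_on) (simp add: linear_conv_bounded_linear)
  ultimately obtain v where v: "v \<in> K" and vmax: "\<And>y. y \<in> K \<Longrightarrow> inner y (A y) \<le> inner v (A v)"
    using continuous_attains_sup[of K "\<lambda>x. inner x (A x)"] by blast
  have "inner x (A x) \<le> inner v (A v) * inner x x" if "x \<in> V" for x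
  proof (cases "x = 0")
    case True
    then show ?thesis
      using linear_0[OF lin] by simp
  next
    case False
    have "inner (x /\<^sub>R norm x) (A (x /\<^sub>R norm x)) \<le> inner v (A v)"
      using vmax unit_in_K[OF that False] by blast
    then have "inner x (A x) / (norm x)\<^sup>2 \<le> inner v (A v)"
      by (simp add: linear_scale[OF lin] power2_eq_square divide_inverse mult_ac)
    then show ?thesis
      using False by (simp add: dot_square_norm field_simps)
  qed
  moreover have "v \<in> V" "norm v = 1"
    using v by (auto simp: K_def)
  ultimately show ?thesis
    using self_adjoint_Rayleigh_maximizer_is_eigenvector[OF lin sa V(1,2)] that by blast
qed

lemma self_adjoint_orthonormal_eigenbasis_of_subspace:
  fixes A :: "'a::euclidean_space \<Rightarrow> 'a"
  assumes lin: "linear A" and sa: "self_adjoint A"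
  shows "subspace V \<Longrightarrow> A ` V \<subseteq> V \<Longrightarrow> \<exists>B. B \<subseteq> V \<and> span B = V \<and> pairwise orthogonal B \<and>
           (\<forall>b\<in>B. norm b = 1 \<and> A b = inner b (A b) *\<^sub>R b)"
proof (induction "dim V" arbitrary: V rule: less_induct)
  case less
  show ?case
  proof (cases "V = {0}")
    case True
    then show ?thesis
      by (intro exI[of _ "{}"]) auto
  next
    case False
    with less.prems obtain v where v: "v \<in> V" "norm v = 1" "A v = inner v (A v) *\<^sub>R v"
      using self_adjoint_has_unit_eigenvector[OF lin sa] by metis
    define W where "W = {x\<in>V. inner v x = 0}"
    have W: "subspace W"
      using less.prems(1) by (auto simp: W_def subspace_def inner_add_right)
    have "A ` W \<subseteq> W"
    proof
      fix y assume "y \<in> A ` W"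
      then obtain x where x: "x \<in> W" "y = A x" by blast
      have "inner v (A x) = inner (A v) x"
        using sa by (simp add: self_adjoint_def)
      also have "\<dots> = inner v (A v) * inner v x"
        by (subst v(3)) simp
      finally show "y \<in> W"
        using x v(3) less.prems(2) by (auto simp: W_def)
    qed
    moreover have "dim W < dim V"
    proof -
      have "v \<notin> W"
        using v(2) by (auto simp: W_def)
      moreover have "W \<subseteq> V"
        by (auto simp: W_def)
      ultimately have "W \<subset> V"
        using v(1) by blast
      then show ?thesis
        using dim_psubset W less.prems(1) by (metis span_eq_iff)
    qed
    ultimately obtain B where B: "B \<subseteq> W" "span B = W" "pairwise orthogonal B"
        "\<forall>b\<in>B. norm b = 1 \<and> A b = inner b (A b) *\<^sub>R b"
      using less.hyps W by blast
    show ?thesis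
    proof (intro exI[of _ "insert v B"] conjI)
      show "insert v B \<subseteq> V"
        using B(1) v(1) by (auto simp: W_def)
      show "span (insert v B) = V"
      proof
        show "span (insert v B) \<subseteq> V"
          by (rule span_minimal) (use \<open>insert v B \<subseteq> V\<close> less.prems(1) in auto)
        show "V \<subseteq> span (insert v B)"
        proof
          fix x assume "x \<in> V"
          moreover have "inner v v = 1"
            using v(2) by (simp add: dot_square_norm)
          ultimately have "x - inner v x *\<^sub>R v \<in> W"
            using v(1) less.prems(1) by (simp add: W_def subspace_diff subspace_scale inner_diff_right)
          then show "x \<in> span (insert v B)"
            using B(2) span_breakdown_eq by blast
        qed
      qed
      show "pairwise orthogonal (insert v B)"
        using B(1,3) by (auto simp: pairwise_insert W_def orthogonal_def inner_commute)
      show "\<forall>b\<in>insert v B. norm b = 1 \<and> A b = inner b (A b) *\<^sub>R b"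
        using B(4) v by auto
    qed
  qed
qed

lemma self_adjoint_orthonormal_eigenbasis:
  fixes A :: "'a::euclidean_space \<Rightarrow> 'a"
  assumes "linear A" "self_adjoint A"
  obtains B where "finite B" "span B = UNIV" "pairwise orthogonal B" "\<And>b. b \<in> B \<Longrightarrow> norm b = 1"
    "\<And>b. b \<in> B \<Longrightarrow> A b = inner b (A b) *\<^sub>R b"
  using self_adjoint_orthonormal_eigenbasis_of_subspace[OF assms subspace_UNIV]
    pairwise_orthogonal_imp_finite by blast

lemma orthonormal_sum_inner:
  fixes B :: "'a::real_inner set"
  assumes "finite B" "pairwise orthogonal B" "\<And>b. b \<in> B \<Longrightarrow> norm b = 1" "c \<in> B"
  shows "inner c (\<Sum>b\<in>B. f b *\<^sub>R b) = f c"
proof -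
  have "inner c (\<Sum>b\<in>B. f b *\<^sub>R b) = (\<Sum>b\<in>B. if b = c then f b else 0)"
    unfolding inner_sum_right
  proof (intro sum.cong refl)
    fix b assume "b \<in> B"
    then show "inner c (f b *\<^sub>R b) = (if b = c then f b else 0)"
      using assms(2-4) by (auto simp: pairwise_def orthogonal_def dot_square_norm)
  qed
  also have "\<dots> = f c"
    using assms(1,4) by simp
  finally show ?thesis .
qed

lemma orthonormal_span_expansion:
  fixes B :: "'a::euclidean_space set"
  assumes orth: "pairwise orthogonal B" and unit: "\<And>b. b \<in> B \<Longrightarrow> norm b = 1" and x: "x \<in> span B"
  shows "(\<Sum>b\<in>B. inner b x *\<^sub>R b) = x"
proof -
  define y where "y = x - (\<Sum>b\<in>B. inner b x *\<^sub>R b)"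
  have "y \<in> span B"
    unfolding y_def by (intro span_diff x span_sum span_mul span_base)
  moreover have "(\<Sum>b\<in>B. (inner b x / inner b b) *\<^sub>R b) = (\<Sum>b\<in>B. inner b x *\<^sub>R b)"
    using unit by (intro sum.cong refl) (simp add: dot_square_norm)
  ultimately have "orthogonal y y"
    using Gram_Schmidt_step[OF orth, of y x] by (simp add: y_def)
  then have "y = 0"
    by (simp add: orthogonal_self)
  then show ?thesis
    by (simp add: y_def)
qed

lemma psd_op_kernel:
  assumes psd: "psd_op A" and "inner x (A x) = 0"
  shows "A x = 0"
proof -
  have lin: "linear A" and sa: "\<And>x y. inner (A x) y = inner x (A y)"
    and nonneg: "\<And>x. 0 \<le> inner x (A x)"
    using psd by (auto simp: psd_op_def self_adjoint_def)
  define y where "y = A x"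
  have "2 * inner y y = 0"
  proof (rule linear_coeff_zero_if_quadratic_nonpos)
    fix t
    have "0 \<le> inner (x - t *\<^sub>R y) (A x - t *\<^sub>R A y)"
      using nonneg[of "x - t *\<^sub>R y"] by (simp add: linear_diff[OF lin] linear_scale[OF lin])
    moreover have "inner x (A y) = inner y y"
      using sa[of x y] by (simp add: y_def inner_commute)
    ultimately show "2 * inner y y * t + - inner y (A y) * t\<^sup>2 \<le> 0"
      using \<open>inner x (A x) = 0\<close>
      by (simp add: y_def inner_commute power2_eq_square algebra_simps)
  qed
  then show ?thesis
    by (simp add: y_def)
qed

lemma psd_op_weighted_projection_sum:
  fixes B :: "'a::real_inner set"
  assumes nonneg: "\<And>b. b \<in> B \<Longrightarrow> 0 \<le> w b"
  shows "psd_op (\<lambda>x. \<Sum>b\<in>B. (w b * inner b x) *\<^sub>R b)"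
proof -
  let ?S = "\<lambda>x. \<Sum>b\<in>B. (w b * inner b x) *\<^sub>R b"
  have "linear ?S"
    by (rule linearI)
      (simp_all add: inner_add_right distrib_left scaleR_add_left sum.distrib scaleR_sum_right
        mult.left_commute)
  moreover have "self_adjoint ?S"
    unfolding self_adjoint_def by (simp add: inner_sum_left inner_sum_right inner_commute mult_ac)
  moreover have "0 \<le> inner x (?S x)" for x
  proof -
    have "inner x (?S x) = (\<Sum>b\<in>B. w b * (inner b x)\<^sup>2)"
      by (simp add: inner_sum_right inner_commute power2_eq_square mult.assoc)
    then show ?thesis
      by (simp add: sum_nonneg nonneg)
  qed
  ultimately show ?thesis
    by (simp add: psd_op_def)
qed

lemma psd_op_sqrt_exists:
  fixes A :: "'a::euclidean_space \<Rightarrow> 'a"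
  assumes psd: "psd_op A"
  obtains S where "psd_op S" "\<And>x. S (S x) = A x" "range S \<subseteq> range A"
proof -
  have lin: "linear A" and sa: "self_adjoint A" and nonneg: "\<And>x. 0 \<le> inner x (A x)"
    using psd by (auto simp: psd_op_def)
  obtain B where B: "finite B" "span B = UNIV" "pairwise orthogonal B" "\<And>b. b \<in> B \<Longrightarrow> norm b = 1"
    and eig: "\<And>b. b \<in> B \<Longrightarrow> A b = inner b (A b) *\<^sub>R b"
    using self_adjoint_orthonormal_eigenbasis[OF lin sa] by blast
  define eigval where "eigval b = inner b (A b)" for b
  have eigval: "A b = eigval b *\<^sub>R b" if "b \<in> B" for b
    unfolding eigval_def by (rule eig[OF that])
  define S where "S x = (\<Sum>b\<in>B. (sqrt (eigval b) * inner b x) *\<^sub>R b)" for x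
  have "psd_op S"
    unfolding S_def[abs_def] by (rule psd_op_weighted_projection_sum) (simp add: eigval_def nonneg)
  moreover have "S (S x) = A x" for x
  proof -
    have coeff: "inner c (S x) = sqrt (eigval c) * inner c x" if "c \<in> B" for c
      unfolding S_def by (rule orthonormal_sum_inner[OF B(1,3,4) that])
    have "S (S x) = (\<Sum>b\<in>B. inner b x *\<^sub>R (eigval b *\<^sub>R b))"
      unfolding S_def[of "S x"] using nonneg
      by (intro sum.cong refl) (simp add: coeff eigval_def mult_ac flip: power2_eq_square)
    also have "\<dots> = A (\<Sum>b\<in>B. inner b x *\<^sub>R b)"
      by (simp add: linear_sum[OF lin] linear_scale[OF lin] eigval)
    also have "\<dots> = A x"
      using orthonormal_span_expansion[OF B(3,4)] B(2) by simp
    finally show ?thesis .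
  qed
  moreover have "range S \<subseteq> range A"
  proof -
    have range_A: "subspace (range A)"
      by (rule linear_subspace_image[OF lin subspace_UNIV])
    have "b \<in> range A" if "b \<in> B" "eigval b \<noteq> 0" for b
      using that by (intro range_eqI[of _ _ "b /\<^sub>R eigval b"]) (simp add: linear_scale[OF lin] eigval)
    then have term_in_range: "(sqrt (eigval b) * inner b x) *\<^sub>R b \<in> range A" if "b \<in> B" for b x
      using that subspace_scale[OF range_A] subspace_0[OF range_A] by (cases "eigval b = 0") auto
    show ?thesis
      unfolding S_def by (intro image_subsetI subspace_sum[OF range_A] term_in_range)
  qed
  ultimately show ?thesis
    using that by blast
qed

lemma psd_op_sqrts_agree_on_eigenvector_of_difference:
  assumes S: "psd_op S" and T: "psd_op T" and sq: "\<And>x. S (S x) = T (T x)"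
    and eig: "S b - T b = \<mu> *\<^sub>R b"
  shows "S b = T b"
proof -
  have linS: "linear S"
    using S by (simp add: psd_op_def)
  \<comment> \<open>\<open>S\<^sup>2 - T\<^sup>2 = S (S - T) + (S - T) T\<close>, and \<open>S - T\<close> is self-adjoint\<close>
  have "0 = inner b (S (S b - T b)) + inner (S b - T b) (T b)"
    using sq[of b] S T by (simp add: psd_op_def self_adjoint_def linear_diff[OF linS]
        inner_diff_left inner_diff_right)
  also have "\<dots> = \<mu> * (inner b (S b) + inner b (T b))"
    by (simp add: eig linear_scale[OF linS] algebra_simps)
  finally have "\<mu> = 0 \<or> inner b (S b) + inner b (T b) = 0"
    by simp
  moreover have "0 \<le> inner b (S b)" "0 \<le> inner b (T b)"
    using S T by (auto simp: psd_op_def)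
  ultimately have "\<mu> = 0 \<or> S b = 0 \<and> T b = 0"
    using psd_op_kernel[OF S, of b] psd_op_kernel[OF T, of b] by auto
  then show ?thesis
    using eig by auto
qed

lemma psd_op_sqrt_unique:
  fixes S T :: "'a::euclidean_space \<Rightarrow> 'a"
  assumes S: "psd_op S" and T: "psd_op T" and sq: "\<And>x. S (S x) = T (T x)"
  shows "S = T"
proof -
  define D where "D x = S x - T x" for x
  have linD: "linear D"
    using S T unfolding D_def[abs_def] by (intro linear_compose_sub) (simp_all add: psd_op_def)
  have "self_adjoint D"
    using S T by (simp add: D_def psd_op_def self_adjoint_def inner_diff_left inner_diff_right)
  then obtain B where B: "span B = UNIV" "pairwise orthogonal B" "\<And>b. b \<in> B \<Longrightarrow> norm b = 1"
    and eig: "\<And>b. b \<in> B \<Longrightarrow> D b = inner b (D b) *\<^sub>R b"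
    using self_adjoint_orthonormal_eigenbasis[OF linD] by metis
  have D_basis: "D b = 0" if "b \<in> B" for b
    using psd_op_sqrts_agree_on_eigenvector_of_difference[OF S T sq eig[OF that, unfolded D_def]]
    by (simp add: D_def)
  have "D x = 0" for x
  proof -
    have "D x = D (\<Sum>b\<in>B. inner b x *\<^sub>R b)"
      using orthonormal_span_expansion[OF B(2,3), of x] B(1) by simp
    also have "\<dots> = (\<Sum>b\<in>B. inner b x *\<^sub>R D b)"
      by (simp add: linear_sum[OF linD] linear_scale[OF linD])
    finally show ?thesis
      by (simp add: D_basis)
  qed
  then show ?thesis
    by (auto simp: D_def)
qed

section \<open>Square roots of positive semidefinite matrices\<close>

definition is_mat_sqrt :: "nat \<Rightarrow> (nat \<Rightarrow> nat \<Rightarrow> real) \<Rightarrow> (nat \<Rightarrow> nat \<Rightarrow> real) \<Rightarrow> bool" where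
  "is_mat_sqrt k A R \<longleftrightarrow> psd_mat k R \<and> (\<forall>s<k. \<forall>t<k. (\<Sum>r<k. R s r * R r t) = A s t) \<and>
     (\<forall>s t. k \<le> s \<or> k \<le> t \<longrightarrow> R s t = 0)"

lemma mat_sqrt_eq_The: "mat_sqrt k A = (THE R. is_mat_sqrt k A R)"
  by (simp add: mat_sqrt_def is_mat_sqrt_def)

lemma psd_mat_if_posdef_mat:
  assumes "posdef_mat k A"
  shows "psd_mat k A"
  unfolding psd_mat_def
proof (intro conjI allI)
  show "sym_mat k A"
    using assms by (simp add: posdef_mat_def)
  fix v :: "nat \<Rightarrow> real"
  show "0 \<le> (\<Sum>s<k. \<Sum>t<k. v s * A s t * v t)"
  proof (cases "\<exists>t<k. v t \<noteq> 0")
    case True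
    then show ?thesis
      using assms by (simp add: posdef_mat_def less_imp_le)
  next
    case False
    then show ?thesis
      by simp
  qed
qed

lemma is_mat_sqrt_column_norm:
  assumes R: "is_mat_sqrt k A R" and s: "s < k"
  shows "(\<Sum>a<k. (R a s)\<^sup>2) = A s s"
proof -
  have "(\<Sum>a<k. (R a s)\<^sup>2) = (\<Sum>a<k. R s a * R a s)"
    using R s by (intro sum.cong refl)
      (auto simp: is_mat_sqrt_def psd_mat_def sym_mat_def power2_eq_square)
  also have "\<dots> = A s s"
    using R s by (simp add: is_mat_sqrt_def)
  finally show ?thesis .
qed

text \<open>Matrices indexed by \<open>{..<k}\<close> act through an orthonormal frame \<open>E\<close> as operators on a
  Euclidean space, where the operator square root is available. The frame is only an auxiliary
  device: \<open>mat_sqrt\<close> does not depend on it.\<close>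

locale orthonormal_frame =
  fixes E :: "nat \<Rightarrow> 'a::euclidean_space" and k :: nat
  assumes inner_frame: "s < k \<Longrightarrow> t < k \<Longrightarrow> inner (E s) (E t) = (if s = t then 1 else 0)"
begin

definition mat_op :: "(nat \<Rightarrow> nat \<Rightarrow> real) \<Rightarrow> 'a \<Rightarrow> 'a" where
  "mat_op A x = (\<Sum>s<k. (\<Sum>t<k. A s t * inner (E t) x) *\<^sub>R E s)"

lemma inner_frame_sum: "s < k \<Longrightarrow> inner (E s) (\<Sum>t<k. c t *\<^sub>R E t) = c s"
  by (simp add: inner_sum_right inner_frame if_distrib cong: if_cong)

lemma inner_frame_mat_op: "s < k \<Longrightarrow> inner (E s) (mat_op A x) = (\<Sum>t<k. A s t * inner (E t) x)"
  unfolding mat_op_def by (rule inner_frame_sum)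

lemma inner_frame_mat_op_frame: "s < k \<Longrightarrow> t < k \<Longrightarrow> inner (E s) (mat_op A (E t)) = A s t"
  by (simp add: inner_frame_mat_op inner_frame if_distrib cong: if_cong)

lemma linear_mat_op: "linear (mat_op A)"
  by (rule linearI)
    (simp_all add: mat_op_def inner_add_right distrib_left sum.distrib scaleR_add_left
      scaleR_sum_right sum_distrib_left mult.left_commute)

lemma inner_mat_op: "inner y (mat_op A x) = (\<Sum>s<k. \<Sum>t<k. inner (E s) y * A s t * inner (E t) x)"
  unfolding mat_op_def inner_sum_right inner_scaleR_right sum_distrib_right
  by (intro sum.cong refl) (simp add: inner_commute[of y] mult_ac)

lemma psd_op_mat_op:
  assumes "psd_mat k A"
  shows "psd_op (mat_op A)"
proof -
  have sym: "A s t = A t s" if "s < k" "t < k" for s t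
    using assms that by (auto simp: psd_mat_def sym_mat_def)
  have "inner (mat_op A x) y = inner x (mat_op A y)" for x y
  proof -
    have "inner (mat_op A x) y = (\<Sum>s<k. \<Sum>t<k. inner (E s) y * A s t * inner (E t) x)"
      by (simp add: inner_commute inner_mat_op)
    also have "\<dots> = (\<Sum>t<k. \<Sum>s<k. inner (E t) x * A t s * inner (E s) y)"
      by (subst sum.swap) (intro sum.cong refl, simp add: sym mult_ac)
    also have "\<dots> = inner x (mat_op A y)"
      by (simp add: inner_mat_op)
    finally show ?thesis .
  qed
  moreover have "0 \<le> inner x (mat_op A x)" for x
    using assms by (simp add: inner_mat_op psd_mat_def)
  ultimately show ?thesis
    by (simp add: psd_op_def self_adjoint_def linear_mat_op)
qed

lemma mat_op_mat_op: "mat_op A (mat_op B x) = mat_op (\<lambda>s t. \<Sum>r<k. A s r * B r t) x"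
proof -
  have row: "(\<Sum>r<k. A s r * (\<Sum>t<k. B r t * c t)) = (\<Sum>t<k. (\<Sum>r<k. A s r * B r t) * c t)"
    for s and c :: "nat \<Rightarrow> real"
  proof -
    have "(\<Sum>r<k. A s r * (\<Sum>t<k. B r t * c t)) = (\<Sum>r<k. \<Sum>t<k. A s r * (B r t * c t))"
      by (simp add: sum_distrib_left)
    also have "\<dots> = (\<Sum>t<k. \<Sum>r<k. A s r * (B r t * c t))"
      by (rule sum.swap)
    also have "\<dots> = (\<Sum>t<k. (\<Sum>r<k. A s r * B r t) * c t)"
      by (simp add: sum_distrib_right mult.assoc)
    finally show ?thesis .
  qed
  show ?thesis
    by (simp add: mat_op_def[of A] mat_op_def[of "\<lambda>s t. \<Sum>r<k. A s r * B r t"] inner_frame_mat_op row)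
qed

lemma mat_op_cong: "(\<And>s t. s < k \<Longrightarrow> t < k \<Longrightarrow> A s t = B s t) \<Longrightarrow> mat_op A = mat_op B"
  by (simp add: mat_op_def fun_eq_iff)

lemma range_mat_op: "range (mat_op A) \<subseteq> span (E ` {..<k})"
  unfolding mat_op_def by (intro image_subsetI span_sum span_mul span_base imageI)

lemma frame_span_expansion:
  assumes "y \<in> span (E ` {..<k})"
  shows "(\<Sum>r<k. inner (E r) y *\<^sub>R E r) = y"
proof -
  have inj: "inj_on E {..<k}"
  proof (rule inj_onI)
    fix s t assume st: "s \<in> {..<k}" "t \<in> {..<k}" "E s = E t"
    then have "inner (E s) (E t) = 1"
      using inner_frame[of s s] by simp
    then show "s = t"
      using inner_frame[of s t] st by (auto split: if_splits)
  qed
  have orth: "pairwise orthogonal (E ` {..<k})"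
    using inner_frame by (auto simp: pairwise_def orthogonal_def)
  have unit: "norm b = 1" if "b \<in> E ` {..<k}" for b
    using that inner_frame by (auto simp: norm_eq_sqrt_inner)
  have "(\<Sum>b\<in>E ` {..<k}. inner b y *\<^sub>R b) = y"
    by (rule orthonormal_span_expansion[OF orth unit assms])
  then show ?thesis
    by (simp add: sum.reindex[OF inj])
qed

definition op_mat :: "('a \<Rightarrow> 'a) \<Rightarrow> nat \<Rightarrow> nat \<Rightarrow> real" where
  "op_mat S s t = (if s < k \<and> t < k then inner (E s) (S (E t)) else 0)"

lemma psd_mat_op_mat:
  assumes "psd_op S"
  shows "psd_mat k (op_mat S)"
proof -
  have lin: "linear S" and sa: "\<And>x y. inner (S x) y = inner x (S y)"
    and nonneg: "\<And>x. 0 \<le> inner x (S x)"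
    using assms by (auto simp: psd_op_def self_adjoint_def)
  have "op_mat S s t = op_mat S t s" for s t
    using sa by (simp add: op_mat_def inner_commute)
  moreover have "0 \<le> (\<Sum>s<k. \<Sum>t<k. v s * op_mat S s t * v t)" for v
  proof -
    define y where "y = (\<Sum>s<k. v s *\<^sub>R E s)"
    have "inner y (S y) = (\<Sum>t<k. \<Sum>s<k. v s * inner (E s) (S (E t)) * v t)"
      by (simp add: y_def linear_sum[OF lin] linear_scale[OF lin] inner_sum_left inner_sum_right
          sum_distrib_left mult_ac)
    also have "\<dots> = (\<Sum>s<k. \<Sum>t<k. v s * op_mat S s t * v t)"
      by (subst sum.swap) (simp add: op_mat_def)
    finally show ?thesis
      using nonneg[of y] by simp
  qed
  ultimately show ?thesis
    by (simp add: psd_mat_def sym_mat_def)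
qed

lemma is_mat_sqrt_exists:
  assumes "psd_mat k A"
  obtains R where "is_mat_sqrt k A R"
proof -
  obtain S where S: "psd_op S" and sq: "\<And>x. S (S x) = mat_op A x"
    and range: "range S \<subseteq> range (mat_op A)"
    using psd_op_sqrt_exists[OF psd_op_mat_op[OF assms]] by blast
  have sa: "\<And>x y. inner (S x) y = inner x (S y)"
    using S by (auto simp: psd_op_def self_adjoint_def)
  have "(\<Sum>r<k. op_mat S s r * op_mat S r t) = A s t" if "s < k" "t < k" for s t
  proof -
    \<comment> \<open>\<open>S\<close> maps into the span of the frame, so its columns are expanded exactly\<close>
    have "S (E t) \<in> span (E ` {..<k})"
      using range range_mat_op by blast
    then have expand: "(\<Sum>r<k. inner (E r) (S (E t)) *\<^sub>R E r) = S (E t)"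
      by (rule frame_span_expansion)
    have "(\<Sum>r<k. op_mat S s r * op_mat S r t) =
        (\<Sum>r<k. inner (S (E s)) (E r) * inner (E r) (S (E t)))"
      using that by (simp add: op_mat_def sa)
    also have "\<dots> = inner (S (E s)) (S (E t))"
      by (subst (2) expand[symmetric]) (simp add: inner_sum_right mult.commute)
    also have "\<dots> = A s t"
      using that by (simp add: sa sq inner_frame_mat_op_frame)
    finally show ?thesis .
  qed
  then have "is_mat_sqrt k A (op_mat S)"
    using psd_mat_op_mat[OF S] by (auto simp: is_mat_sqrt_def op_mat_def)
  then show ?thesis
    by (rule that)
qed

lemma is_mat_sqrt_unique:
  assumes R: "is_mat_sqrt k A R" and R': "is_mat_sqrt k A R'"
  shows "R = R'"
proof -
  have op_sq: "mat_op Q (mat_op Q x) = mat_op A x" if "is_mat_sqrt k A Q" for Q x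
  proof -
    have "mat_op (\<lambda>s t. \<Sum>r<k. Q s r * Q r t) = mat_op A"
      by (rule mat_op_cong) (use that in \<open>simp add: is_mat_sqrt_def\<close>)
    then show ?thesis
      by (simp add: mat_op_mat_op)
  qed
  have "mat_op R = mat_op R'"
    by (rule psd_op_sqrt_unique) (use R R' in \<open>auto simp: is_mat_sqrt_def psd_op_mat_op op_sq\<close>)
  then have "R s t = R' s t" if "s < k" "t < k" for s t
    using inner_frame_mat_op_frame[OF that, of R] inner_frame_mat_op_frame[OF that, of R'] by simp
  moreover have "R s t = R' s t" if "k \<le> s \<or> k \<le> t" for s t
    using that R R' by (auto simp: is_mat_sqrt_def)
  ultimately show ?thesis
    by (intro ext) (meson not_le)
qed

lemma is_mat_sqrt_mat_sqrt:
  assumes "psd_mat k A"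
  shows "is_mat_sqrt k A (mat_sqrt k A)"
proof -
  obtain R where R: "is_mat_sqrt k A R"
    using is_mat_sqrt_exists[OF assms] .
  show ?thesis
    unfolding mat_sqrt_eq_The using R
    by (rule theI[where P = "is_mat_sqrt k A"]) (rule is_mat_sqrt_unique[OF _ R])
qed

end

lemma enum_idx_in:
  assumes "finite S" "s < card S"
  shows "enum_idx S s \<in> S"
  using nth_mem[of s "sorted_list_of_set S"] assms by (simp add: enum_idx_def)

lemma orthonormal_frame_axis_enum_idx:
  fixes S :: "'n::{finite,linorder} set"
  shows "orthonormal_frame (\<lambda>s. axis (enum_idx S s) (1::real)) (card S)"
proof
  fix s t assume "s < card S" "t < card S"
  then have "enum_idx S s = enum_idx S t \<longleftrightarrow> s = t"
    by (simp add: enum_idx_def nth_eq_iff_index_eq)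
  then show "inner (axis (enum_idx S s) (1::real)) (axis (enum_idx S t) 1) = (if s = t then 1 else 0)"
    by (simp add: inner_axis_axis)
qed

lemma is_mat_sqrt_mat_sqrt_card:
  fixes S :: "'n::{finite,linorder} set"
  assumes "psd_mat (card S) A"
  shows "is_mat_sqrt (card S) A (mat_sqrt (card S) A)"
proof -
  interpret orthonormal_frame "\<lambda>s. axis (enum_idx S s) (1::real)" "card S"
    by (rule orthonormal_frame_axis_enum_idx)
  show ?thesis
    using assms by (rule is_mat_sqrt_mat_sqrt)
qed

section \<open>Bounds on second derivatives\<close>

lemma DERIV_le_of_lipschitz:
  fixes \<phi> :: "real \<Rightarrow> real"
  assumes deriv: "(\<phi> has_real_derivative d) (at x)"
    and lip: "\<And>t. \<bar>\<phi> (x + t) - \<phi> x\<bar> \<le> L * \<bar>t\<bar>"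
  shows "d \<le> L"
proof (rule tendsto_upperbound)
  show "((\<lambda>y. (\<phi> y - \<phi> x) / (y - x)) \<longlongrightarrow> d) (at x)"
    using deriv by (simp add: has_field_derivative_iff)
  have "(\<phi> y - \<phi> x) / (y - x) \<le> L" if "y \<noteq> x" for y
  proof -
    have "(\<phi> y - \<phi> x) / (y - x) \<le> \<bar>\<phi> y - \<phi> x\<bar> / \<bar>y - x\<bar>"
      unfolding abs_divide[symmetric] by (rule abs_ge_self)
    moreover have "\<bar>\<phi> y - \<phi> x\<bar> / \<bar>y - x\<bar> \<le> L"
    proof -
      have "0 < \<bar>y - x\<bar>"
        using that by simp
      then show ?thesis
        using lip[of "y - x"] by (simp only: pos_divide_le_eq) simp
    qed
    ultimately show ?thesis
      by (rule order_trans)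
  qed
  then show "\<forall>\<^sub>F y in at x. (\<phi> y - \<phi> x) / (y - x) \<le> L"
    unfolding eventually_at_filter by (intro always_eventually allI impI)
qed simp

lemma frechet_derivative_le_of_lipschitz_along:
  fixes \<phi> :: "'a::real_normed_vector \<Rightarrow> real"
  assumes diff: "\<phi> differentiable (at x)"
    and lip: "\<And>t. \<bar>\<phi> (x + t *\<^sub>R e) - \<phi> x\<bar> \<le> L * \<bar>t\<bar>"
  shows "frechet_derivative \<phi> (at x) e \<le> L"
proof -
  define D where "D = frechet_derivative \<phi> (at x)"
  have "(\<phi> has_derivative D) (at x)"
    using diff by (simp add: D_def frechet_derivative_works)
  moreover have "((\<lambda>t::real. x + t *\<^sub>R e) has_derivative (\<lambda>t. t *\<^sub>R e)) (at 0)"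
    by (auto intro!: derivative_eq_intros)
  ultimately have "((\<phi> \<circ> (\<lambda>t. x + t *\<^sub>R e)) has_derivative (D \<circ> (\<lambda>t. t *\<^sub>R e))) (at 0)"
    by (intro diff_chain_at) simp_all
  moreover have "D \<circ> (\<lambda>t. t *\<^sub>R e) = (\<lambda>t. D e * t)"
    using linear_scale[OF linear_frechet_derivative[OF diff]] by (auto simp: D_def fun_eq_iff)
  ultimately have "((\<lambda>t. \<phi> (x + t *\<^sub>R e)) has_real_derivative D e) (at 0)"
    unfolding has_field_derivative_def by (simp add: comp_def)
  then show ?thesis
    unfolding D_def by (rule DERIV_le_of_lipschitz) (simp add: lip)
qed

lemma hess_diag_le_of_lipschitz:
  fixes f :: "real^'n \<Rightarrow> real"
  assumes "pdiff j f differentiable (at x)"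
    and "\<And>y h. \<bar>pdiff j f (y + h *\<^sub>R axis j 1) - pdiff j f y\<bar> \<le> Lj * \<bar>h\<bar>"
  shows "hess f x j j \<le> Lj"
  unfolding hess_def pdiff_def[of j "pdiff j f"] using assms
  by (rule frechet_derivative_le_of_lipschitz_along)

lemma Ck_on_Suc_Suc_partial_differentiable:
  assumes "Ck_on (Suc (Suc m)) U f" "b \<in> Basis" "x \<in> U"
  shows "(\<lambda>y. frechet_derivative f (at y) b) differentiable (at x)"
proof -
  have "\<forall>b\<in>Basis. \<forall>x\<in>U. (\<lambda>y. frechet_derivative f (at y) b) differentiable (at x)"
    using assms(1) by simp
  then show ?thesis
    using assms(2,3) by blast
qed

lemma pdiff_differentiable_if_Ck_on:
  fixes f :: "real^'n \<Rightarrow> real"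
  shows "Ck_on (Suc (Suc m)) U f \<Longrightarrow> x \<in> U \<Longrightarrow> pdiff j f differentiable (at x)"
  unfolding pdiff_def[abs_def] by (rule Ck_on_Suc_Suc_partial_differentiable[of m]) simp_all

lemma frechet_derivative_real_eq_deriv:
  fixes \<phi> :: "real \<Rightarrow> real"
  shows "\<phi> differentiable (at x) \<Longrightarrow> frechet_derivative \<phi> (at x) 1 = deriv \<phi> x"
  by (simp add: frechet_derivative_eq_vector_derivative field_derivative_eq_vector_derivative)

lemma Ck_on_Suc_Suc_real_deriv_differentiable:
  fixes \<phi> :: "real \<Rightarrow> real"
  assumes "open U" "Ck_on (Suc (Suc m)) U \<phi>" "x \<in> U"
  shows "\<phi> differentiable (at x)" and "deriv \<phi> differentiable (at x)"
proof -
  show "\<phi> differentiable (at x)"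
    using assms(2,3) by simp
  have "(\<lambda>y. frechet_derivative \<phi> (at y) 1) differentiable (at x)"
    by (rule Ck_on_Suc_Suc_partial_differentiable[OF assms(2) _ assms(3)]) simp
  then obtain D where D: "((\<lambda>y. frechet_derivative \<phi> (at y) 1) has_derivative D) (at x)"
    by (auto simp: differentiable_def)
  have "frechet_derivative \<phi> (at y) 1 = deriv \<phi> y" if "y \<in> U" for y
    using assms(2) that by (simp add: frechet_derivative_real_eq_deriv)
  then have "(deriv \<phi> has_derivative D) (at x)"
    using has_derivative_transform_within_open[OF D assms(1,3)] by blast
  then show "deriv \<phi> differentiable (at x)"
    by (auto simp: differentiable_def)
qed

lemma convex_on_if_ext_convex:
  fixes H :: "real \<Rightarrow> ereal" and \<psi> :: "real \<Rightarrow> real"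
  assumes conv: "ext_convex H" and C: "convex C" and fin: "\<And>x. x \<in> C \<Longrightarrow> H x = ereal (\<psi> x)"
  shows "convex_on C \<psi>"
proof (rule convex_onI[OF _ C])
  fix t x y :: real assume t: "0 < t" "t < 1" and xy: "x \<in> C" "y \<in> C"
  have z: "(1 - t) * x + t * y \<in> C"
    using convexD[OF C xy, of "1 - t" t] t by simp
  have "H ((1 - t) * x + t * y) \<le> ereal (1 - t) * H x + ereal t * H y"
    using conv t unfolding ext_convex_def by blast
  then have "ereal (\<psi> ((1 - t) * x + t * y)) \<le> ereal ((1 - t) * \<psi> x + t * \<psi> y)"
    by (simp only: fin[OF z] fin[OF xy(1)] fin[OF xy(2)] times_ereal.simps(1) plus_ereal.simps(1))
  then show "\<psi> ((1 - t) *\<^sub>R x + t *\<^sub>R y) \<le> (1 - t) * \<psi> x + t * \<psi> y"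
    by simp
qed

lemma convex_on_deriv_mono:
  fixes \<psi> \<psi>' :: "real \<Rightarrow> real"
  assumes conv: "convex_on A \<psi>" and A: "open A"
    and deriv: "\<And>y. y \<in> A \<Longrightarrow> (\<psi> has_real_derivative \<psi>' y) (at y)"
    and yz: "y \<in> A" "z \<in> A" "y < z"
  shows "\<psi>' y \<le> \<psi>' z"
proof -
  have "convex A" and "interior A = A"
    using conv A by (simp_all add: convex_on_def interior_open)
  have above: "\<psi>' c * (w - c) \<le> \<psi> w - \<psi> c" if "c \<in> A" "w \<in> A" for c w
  proof (rule convex_on_imp_above_tangent[OF conv])
    show "connected A"
      using \<open>convex A\<close> by (rule convex_connected)
    show "c \<in> interior A"
      using that(1) \<open>interior A = A\<close> by simp
    show "w \<in> A"
      by (rule that(2))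
    show "(\<psi> has_field_derivative \<psi>' c) (at c within A)"
      using deriv[OF that(1)] by (rule has_field_derivative_at_within)
  qed
  have "(\<psi>' z - \<psi>' y) * (z - y) = (\<psi> y - \<psi> z - \<psi>' z * (y - z)) + (\<psi> z - \<psi> y - \<psi>' y * (z - y))"
    by (simp add: algebra_simps)
  also have "\<dots> \<ge> 0"
    using above[OF yz(1,2)] above[OF yz(2,1)] by linarith
  finally show ?thesis
    using yz(3) by (simp add: zero_le_mult_iff)
qed

lemma convex_on_second_deriv_nonneg:
  fixes \<psi> \<psi>' :: "real \<Rightarrow> real"
  assumes conv: "convex_on A \<psi>" and A: "open A" "x \<in> A"
    and deriv: "\<And>y. y \<in> A \<Longrightarrow> (\<psi> has_real_derivative \<psi>' y) (at y)"
    and deriv2: "(\<psi>' has_real_derivative d) (at x)"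
  shows "0 \<le> d"
proof (rule tendsto_lowerbound)
  show "((\<lambda>y. (\<psi>' y - \<psi>' x) / (y - x)) \<longlongrightarrow> d) (at x)"
    using deriv2 by (simp add: has_field_derivative_iff)
  have "\<forall>\<^sub>F y in nhds x. y \<in> A"
    using A by (rule eventually_nhds_in_open)
  then show "\<forall>\<^sub>F y in at x. 0 \<le> (\<psi>' y - \<psi>' x) / (y - x)"
    unfolding eventually_at_filter
  proof eventually_elim
    case (elim y)
    show ?case
    proof (intro impI)
      assume "y \<noteq> x"
      then consider "y < x" | "x < y"
        by linarith
      then show "0 \<le> (\<psi>' y - \<psi>' x) / (y - x)"
      proof cases
        case 1
        then show ?thesis
          using convex_on_deriv_mono[OF conv A(1) deriv elim A(2)] by (intro divide_nonpos_neg) simp_all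
      next
        case 2
        then show ?thesis
          using convex_on_deriv_mono[OF conv A(1) deriv A(2) elim] by (intro divide_nonneg_pos) simp_all
      qed
    qed
  qed
qed simp

lemma gpp_lower_bound_if_weakly_convex:
  fixes h :: "real \<Rightarrow> ereal"
  assumes L: "0 < Lj" and conv: "ext_convex (\<lambda>x. h x / ereal Lj + ereal (\<alpha> / 2 * x\<^sup>2))"
    and U: "open U" "x \<in> U" and fin: "\<forall>y\<in>U. \<exists>r. h y = ereal r"
    and C3: "Ck_on 3 U (\<lambda>y. real_of_ereal (h y))"
  shows "0 \<le> gpp h x / Lj + \<alpha>"
proof -
  define \<phi> where "\<phi> y = real_of_ereal (h y)" for y
  have C2: "Ck_on (Suc (Suc (Suc 0))) U \<phi>"
    using C3 by (simp add: \<phi>_def[abs_def] numeral_3_eq_3)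
  have h_eq: "h y = ereal (\<phi> y)" if "y \<in> U" for y
    using fin that by (force simp: \<phi>_def)
  obtain \<delta> where \<delta>: "0 < \<delta>" "ball x \<delta> \<subseteq> U"
    using U openE by blast
  define \<psi> where "\<psi> y = \<phi> y / Lj + \<alpha> / 2 * y\<^sup>2" for y
  have "convex_on (ball x \<delta>) \<psi>"
  proof (rule convex_on_if_ext_convex[OF conv convex_ball])
    fix y assume "y \<in> ball x \<delta>"
    then have "h y = ereal (\<phi> y)"
      using \<delta>(2) h_eq by blast
    then show "h y / ereal Lj + ereal (\<alpha> / 2 * y\<^sup>2) = ereal (\<psi> y)"
      using L by (simp add: \<psi>_def)
  qed
  moreover have "(\<psi> has_real_derivative deriv \<phi> y / Lj + \<alpha> * y) (at y)" if "y \<in> ball x \<delta>" for y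
  proof -
    have "(\<phi> has_real_derivative deriv \<phi> y) (at y)"
      using Ck_on_Suc_Suc_real_deriv_differentiable(1)[OF U(1) C2] that \<delta>(2)
      by (auto simp: DERIV_deriv_iff_real_differentiable)
    then show ?thesis
      unfolding \<psi>_def[abs_def] using L by (auto intro!: derivative_eq_intros)
  qed
  moreover have "((\<lambda>y. deriv \<phi> y / Lj + \<alpha> * y) has_real_derivative gpp h x / Lj + \<alpha>) (at x)"
  proof -
    have "(deriv \<phi> has_real_derivative deriv (deriv \<phi>) x) (at x)"
      using Ck_on_Suc_Suc_real_deriv_differentiable(2)[OF U(1) C2 U(2)]
      by (simp add: DERIV_deriv_iff_real_differentiable)
    then show ?thesis
      unfolding gpp_def \<phi>_def[symmetric] using L by (auto intro!: derivative_eq_intros)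
  qed
  ultimately show ?thesis
    using \<delta>(1) by (intro convex_on_second_deriv_nonneg[of "ball x \<delta>" \<psi>]) simp_all
qed

lemma step_factor_bounds:
  fixes L h G \<alpha> :: real
  assumes "0 < L" "\<alpha> < 1" "h \<le> L" "0 \<le> G / L + \<alpha>"
  shows "0 < 1 / L / (1 + 1 / L * G)" and "1 / L / (1 + 1 / L * G) * (h + G) \<le> 1"
proof -
  have "0 < 1 + G / L"
    using assms(2,4) by linarith
  then have pos: "0 < L + G"
    using assms(1) by (simp add: field_simps)
  then show "0 < 1 / L / (1 + 1 / L * G)"
    using assms(1) by (simp add: field_simps)
  show "1 / L / (1 + 1 / L * G) * (h + G) \<le> 1"
    using pos assms(1,3) by (simp add: field_simps)
qed

lemma coordinate_step_factor_bounds: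
  fixes f :: "real^'n \<Rightarrow> real" and h :: "real \<Rightarrow> ereal"
  assumes Lj: "0 < Lj" and \<alpha>: "\<alpha> < 1"
    and lip: "\<And>x t. \<bar>pdiff j f (x + t *\<^sub>R axis j 1) - pdiff j f x\<bar> \<le> Lj * \<bar>t\<bar>"
    and f_C3: "\<exists>U. open U \<and> \<beta> \<in> U \<and> Ck_on 3 U f"
    and conv: "ext_convex (\<lambda>x. h x / ereal Lj + ereal (\<alpha> / 2 * x\<^sup>2))"
    and h_C3: "\<exists>U. open U \<and> \<beta> $ j \<in> U \<and> (\<forall>x\<in>U. \<exists>r. h x = ereal r) \<and>
                 Ck_on 3 U (\<lambda>x. real_of_ereal (h x))"
  defines "c \<equiv> 1 / Lj / (1 + 1 / Lj * gpp h (\<beta> $ j))"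
  shows "0 < c \<and> c * (hess f \<beta> j j + gpp h (\<beta> $ j)) \<le> 1"
proof -
  obtain Uf where Uf: "open Uf" "\<beta> \<in> Uf" "Ck_on (Suc (Suc 1)) Uf f"
    using f_C3 by (auto simp: numeral_3_eq_3)
  have hess: "hess f \<beta> j j \<le> Lj"
    using pdiff_differentiable_if_Ck_on[OF Uf(3,2)] lip by (rule hess_diag_le_of_lipschitz)
  have gpp: "0 \<le> gpp h (\<beta> $ j) / Lj + \<alpha>"
    using h_C3 gpp_lower_bound_if_weakly_convex[OF Lj conv] by blast
  show ?thesis
    unfolding c_def using step_factor_bounds[OF Lj \<alpha> hess gpp] by blast
qed

section \<open>The rank-one update\<close>

lemma rank_one_update_norm_eq_imp_fixed:
  fixes r u :: "nat \<Rightarrow> real"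
  assumes c: "0 < c" "c * (\<Sum>a<k. (r a)\<^sup>2) < 2"
    and eq: "vnorm k (\<lambda>a. u a - (\<Sum>b<k. r a * c * r b * u b)) = vnorm k u"
  shows "(\<Sum>a<k. r a * u a) = 0 \<and> (\<forall>a<k. u a - (\<Sum>b<k. r a * c * r b * u b) = u a)"
proof -
  define p where "p = (\<Sum>a<k. r a * u a)"
  define N where "N = (\<Sum>a<k. (r a)\<^sup>2)"
  have update: "(\<Sum>b<k. r a * c * r b * u b) = c * r a * p" for a
    by (simp add: p_def sum_distrib_left mult_ac)
  have "(\<Sum>a<k. (u a - c * r a * p)\<^sup>2) =
      (\<Sum>a<k. (u a)\<^sup>2 - 2 * c * p * (r a * u a) + c\<^sup>2 * p\<^sup>2 * (r a)\<^sup>2)"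
    by (intro sum.cong refl) (simp add: power2_eq_square algebra_simps)
  also have "\<dots> = (\<Sum>a<k. (u a)\<^sup>2) - 2 * c * p * p + c\<^sup>2 * p\<^sup>2 * N"
    by (simp add: sum.distrib sum_subtractf sum_distrib_left p_def N_def)
  finally have "(\<Sum>a<k. (u a)\<^sup>2) - 2 * c * p * p + c\<^sup>2 * p\<^sup>2 * N = (\<Sum>a<k. (u a)\<^sup>2)"
    using eq by (simp add: vnorm_def update sum_nonneg)
  then have "p\<^sup>2 * (c * (c * N - 2)) = 0"
    by (simp add: power2_eq_square algebra_simps)
  moreover have "c * (c * N - 2) \<noteq> 0"
    using c by (simp add: N_def)
  ultimately have "p = 0"
    by simp
  then show ?thesis
    by (simp add: p_def update)
qed

theorem lemma2:
  fixes f :: "(real, 'n::{finite,linorder}) vec \<Rightarrow> real"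
    and g :: "'n \<Rightarrow> real \<Rightarrow> ereal"
    and L :: "'n \<Rightarrow> real"
    and \<beta>h :: "(real, 'n) vec"
  assumes f_convex: "convex_on UNIV f"
    and f_diff: "\<And>x. f differentiable (at x)"
    and L_pos: "\<And>j. L j > 0"
    and f_lip: "\<And>j x h. \<bar>pdiff j f (x + h *\<^sub>R axis j 1) - pdiff j f x\<bar> \<le> L j * \<bar>h\<bar>"
    and g_proper: "\<And>j. ext_proper (g j)"
    and g_closed: "\<And>j. ext_closed (g j)"
    and g_lb: "\<And>j. ext_lower_bounded (g j)"
    and g_weakconv: "\<exists>\<alpha><1. \<forall>j. ext_convex (\<lambda>x. g j x / ereal (L j) + ereal (\<alpha> / 2 * x\<^sup>2))"
    and cd_conv: "\<exists>x :: nat \<Rightarrow> (real, 'n) vec. (\<forall>k. x (Suc k) = cd_epoch f g L (x k)) \<and> x \<longlonglongrightarrow> \<beta>h"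
    and critical: "- grad f \<beta>h \<in> frechet_subdiff (sep_sum g) \<beta>h"
    and nondegen: "\<And>j. j \<notin> gsupp g \<beta>h \<Longrightarrow>
                     - pdiff j f \<beta>h \<in> interior (frechet_subdiff (g j) (\<beta>h $ j))"
    and f_C3: "\<exists>U. open U \<and> \<beta>h \<in> U \<and> Ck_on 3 U f"
    and g_C3: "\<And>j. j \<in> gsupp g \<beta>h \<Longrightarrow> \<exists>U. open U \<and> \<beta>h $ j \<in> U \<and>
                     (\<forall>x\<in>U. \<exists>r. g j x = ereal r) \<and> Ck_on 3 U (\<lambda>x. real_of_ereal (g j x))"
    and M_pd: "posdef_mat (card (gsupp g \<beta>h)) (Mmat f g (gsupp g \<beta>h) \<beta>h)"
  shows "\<forall>s < card (gsupp g \<beta>h). \<forall>u :: nat \<Rightarrow> real.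
     (let k = card (gsupp g \<beta>h);
          R = mat_sqrt k (Mmat f g (gsupp g \<beta>h) \<beta>h);
          v = (\<lambda>a. u a - (\<Sum>b<k. Bmat f g L (gsupp g \<beta>h) \<beta>h s a b * u b))
      in vnorm k v = vnorm k u \<longrightarrow>
         (\<Sum>a<k. R a s * u a) = 0 \<and> (\<forall>a<k. v a = u a))"
proof -
  define S where "S = gsupp g \<beta>h"
  define k where "k = card S"
  define M where "M = Mmat f g S \<beta>h"
  define R where "R = mat_sqrt k M"
  have R: "is_mat_sqrt k M R"
    unfolding R_def k_def using M_pd
    by (intro is_mat_sqrt_mat_sqrt_card psd_mat_if_posdef_mat) (simp add: S_def M_def)
  obtain \<alpha> where \<alpha>: "\<alpha> < 1" and conv: "\<And>j. ext_convex (\<lambda>x. g j x / ereal (L j) + ereal (\<alpha> / 2 * x\<^sup>2))"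
    using g_weakconv by blast
  show ?thesis
    unfolding Let_def S_def[symmetric] k_def[symmetric] M_def[symmetric] R_def[symmetric]
  proof (intro allI impI)
    fix s u assume s: "s < k"
    define j where "j = enum_idx S s"
    define c where "c = 1 / L j / (1 + 1 / L j * gpp (g j) (\<beta>h $ j))"
    have j: "j \<in> gsupp g \<beta>h"
      using enum_idx_in[OF _ s[unfolded k_def]] by (simp add: j_def S_def)
    have "M s s = hess f \<beta>h j j + gpp (g j) (\<beta>h $ j)"
      by (simp add: M_def Mmat_def j_def)
    then have "0 < c \<and> c * M s s \<le> 1"
      unfolding c_def
      by (simp only: coordinate_step_factor_bounds[OF L_pos \<alpha> f_lip f_C3 conv g_C3[OF j]])
    then have c: "0 < c" "c * (\<Sum>a<k. (R a s)\<^sup>2) < 2"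
      using is_mat_sqrt_column_norm[OF R s] by simp_all
    have B: "Bmat f g L S \<beta>h s a b = R a s * c * R b s" for a b
      unfolding Bmat_def Let_def
      by (simp only: M_def[symmetric] k_def[symmetric] R_def[symmetric] j_def[symmetric] c_def[symmetric])
    assume "vnorm k (\<lambda>a. u a - (\<Sum>b<k. Bmat f g L S \<beta>h s a b * u b)) = vnorm k u"
    then have "vnorm k (\<lambda>a. u a - (\<Sum>b<k. R a s * c * R b s * u b)) = vnorm k u"
      by (simp add: B)
    from rank_one_update_norm_eq_imp_fixed[OF c this]
    show "(\<Sum>a<k. R a s * u a) = 0 \<and> (\<forall>a<k. u a - (\<Sum>b<k. Bmat f g L S \<beta>h s a b * u b) = u a)"
      by (simp add: B)
  qed
qed

end
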